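(* Let $n\ge2$, $\alpha\in(-n,0)$ and let $\phi$ be a Young function satisfying $\underline\Lambda_\phi(\alpha)<\infty$ and $\overline\Lambda_\phi(\alpha)<\infty$. Assume $\Omega\subset\mathbb R^n$ is a bounded domain. Then there exists a constant $C>0$ depending on $n,\alpha,\Omega,\phi$ such that for all $x\in\Omega$ and $0<r<t<\frac12\operatorname{diam}\Omega$, $u_{x,r,t}\in\mathbf B^{\alpha,\phi}(\Omega)$ and $$\|u_{x,r,t}\|_{\mathbf B^{\alpha,\phi}(\Omega)}\le C(t-r)^{-\alpha}\Big[\phi^{-1}\Big(\frac{(t-r)^n}{|B_\Omega(x,t)|}\Big)\Big]^{-1}.$$
   Context: A Young function is $\phi\in C([0,\infty))$, convex, with $\phi(0)=0$, $\phi(t)>0$ for $t>0$, $\lim_{t\to\infty}\phi(t)=\infty$; $\phi^{-1}$ is its inverse on $[0,\infty)$. $\underline\Lambda_\phi(\alpha):=\sup_{x>0}\int_0^1\frac{\phi(t^{1-\alpha}x)}{\phi(x)}\frac{dt}{t^{n+1}}$, $\overline\Lambda_\phi(\alpha):=\sup_{x>0}\int_1^\infty\frac{\phi(t^{-\alpha}x)}{\phi(x)}\frac{dt}{t^{n+1}}$. $\|u\|_{\dot{\mathbf B}^{\alpha,\phi}(\Omega)}:=\inf\{\lambda>0:\int_\Omega\int_\Omega\phi(\frac{|u(x)-u(y)|}{\lambda|x-y|^{\alpha}})\frac{dx\,dy}{|x-y|^{2n}}\le1\}$, $\|u\|_{L^\phi(\Omega)}:=\inf\{\lambda>0:\int_\Omega\phi(|u|/\lambda)\,dx\le1\}$;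 $\mathbf B^{\alpha,\phi}(\Omega)$ is the set of measurable $u$ with both finite, normed by $\|u\|_{\mathbf B^{\alpha,\phi}(\Omega)}=\|u\|_{L^\phi(\Omega)}+\|u\|_{\dot{\mathbf B}^{\alpha,\phi}(\Omega)}$. $B_\Omega(x,s):=\Omega\cap B(x,s)$. For $x\in\Omega$, $0<r<t$, $u_{x,r,t}(z)=1$ on $B_\Omega(x,r)$, $=\frac{t-|x-z|}{t-r}$ on $B_\Omega(x,t)\setminus B_\Omega(x,r)$, $=0$ on $\Omega\setminus B_\Omega(x,t)$. *)

theory Defs
  imports "HOL-Analysis.Analysis"
begin

definition young_function :: "(real \<Rightarrow> real) \<Rightarrow> bool" where
  "young_function \<phi> \<longleftrightarrow>
     continuous_on {0..} \<phi> \<and> convex_on {0..} \<phi> \<and> \<phi> 0 = 0 \<and>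
     (\<forall>t>0. \<phi> t > 0) \<and> filterlim \<phi> at_top at_top"

definition phi_inv :: "(real \<Rightarrow> real) \<Rightarrow> real \<Rightarrow> real" where
  "phi_inv \<phi> s = (THE t. t \<ge> 0 \<and> \<phi> t = s)"

definition Lambda_lower :: "(real \<Rightarrow> real) \<Rightarrow> nat \<Rightarrow> real \<Rightarrow> ennreal" where
  "Lambda_lower \<phi> n \<alpha> = (SUP x\<in>{0<..}.
     \<integral>\<^sup>+ t\<in>{0<..1}. ennreal (\<phi> (t powr (1 - \<alpha>) * x) / \<phi> x / t ^ (n + 1)) \<partial>lborel)"

definition Lambda_upper :: "(real \<Rightarrow> real) \<Rightarrow> nat \<Rightarrow> real \<Rightarrow> ennreal" where
  "Lambda_upper \<phi> n \<alpha> = (SUP x\<in>{0<..}.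
     \<integral>\<^sup>+ t\<in>{1..}. ennreal (\<phi> (t powr (- \<alpha>) * x) / \<phi> x / t ^ (n + 1)) \<partial>lborel)"

definition besov_modular :: "'a::euclidean_space set \<Rightarrow> real \<Rightarrow> (real \<Rightarrow> real) \<Rightarrow> ('a \<Rightarrow> real) \<Rightarrow> real \<Rightarrow> ennreal" where
  "besov_modular \<Omega> \<alpha> \<phi> u lam =
     (\<integral>\<^sup>+ x\<in>\<Omega>. (\<integral>\<^sup>+ y\<in>\<Omega>.
        ennreal (\<phi> (\<bar>u x - u y\<bar> / (lam * norm (x - y) powr \<alpha>)) / norm (x - y) ^ (2 * DIM('a)))
      \<partial>lborel) \<partial>lborel)"

definition orlicz_modular :: "'a::euclidean_space set \<Rightarrow> (real \<Rightarrow> real) \<Rightarrow> ('a \<Rightarrow> real) \<Rightarrow> real \<Rightarrow> ennreal" where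
  "orlicz_modular \<Omega> \<phi> u lam = (\<integral>\<^sup>+ x\<in>\<Omega>. ennreal (\<phi> (\<bar>u x\<bar> / lam)) \<partial>lborel)"

definition besov_seminorm :: "'a::euclidean_space set \<Rightarrow> real \<Rightarrow> (real \<Rightarrow> real) \<Rightarrow> ('a \<Rightarrow> real) \<Rightarrow> real" where
  "besov_seminorm \<Omega> \<alpha> \<phi> u = Inf {lam. lam > 0 \<and> besov_modular \<Omega> \<alpha> \<phi> u lam \<le> 1}"

definition orlicz_norm :: "'a::euclidean_space set \<Rightarrow> (real \<Rightarrow> real) \<Rightarrow> ('a \<Rightarrow> real) \<Rightarrow> real" where
  "orlicz_norm \<Omega> \<phi> u = Inf {lam. lam > 0 \<and> orlicz_modular \<Omega> \<phi> u lam \<le> 1}"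

definition besov_norm :: "'a::euclidean_space set \<Rightarrow> real \<Rightarrow> (real \<Rightarrow> real) \<Rightarrow> ('a \<Rightarrow> real) \<Rightarrow> real" where
  "besov_norm \<Omega> \<alpha> \<phi> u = orlicz_norm \<Omega> \<phi> u + besov_seminorm \<Omega> \<alpha> \<phi> u"

text \<open>Membership in B^{alpha,phi}(Omega): measurable on Omega, both (Luxemburg) norms finite,
  i.e. the defining sets of admissible lambda are nonempty.\<close>
definition besov_space :: "'a::euclidean_space set \<Rightarrow> real \<Rightarrow> (real \<Rightarrow> real) \<Rightarrow> ('a \<Rightarrow> real) set" where
  "besov_space \<Omega> \<alpha> \<phi> = {u. u \<in> borel_measurable (lebesgue_on \<Omega>) \<and>
       (\<exists>lam>0. orlicz_modular \<Omega> \<phi> u lam \<le> 1) \<and> (\<exists>lam>0. besov_modular \<Omega> \<alpha> \<phi> u lam \<le> 1)}"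

text \<open>The cut-off function u_{x,r,t} (only its values on Omega matter).\<close>
definition cutoff :: "'a::euclidean_space \<Rightarrow> real \<Rightarrow> real \<Rightarrow> 'a \<Rightarrow> real" where
  "cutoff x r t z = (if dist x z < r then 1 else if dist x z < t then (t - dist x z) / (t - r) else 0)"

end

theory Submission
  imports Defs
begin

(* The cut-off u = u_{x,r,t} takes values in [0,1], vanishes outside B = B_Omega(x,t) and is
   Lipschitz with constant 1/(t-r).  Hence its Orlicz modular at scale lam is at most phi(1/lam)|B|,
   and its Besov integrand at (a,b) is at most (1_B(a) + 1_B(b)) h(|a-b|) with
   h(rho) = phi(min(1, rho/(t-r)) rho^(-alpha) / lam) / rho^(2n); by translation invariance the
   Besov modular is at most 2|B| times the integral of h.  In polar coordinates and after the
   substitution rho = (t-r) tau, the parts tau <= 1 and tau >= 1 of that integral are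
   phi((t-r)^(-alpha)/lam) / (t-r)^n times the integrals in the definitions of Lambda_lower and
   Lambda_upper, so lam = C (t-r)^(-alpha) / phi^(-1)((t-r)^n / |B|) makes the Besov modular at
   most 1.  For the Orlicz modular, finiteness of Lambda_upper gives the growth bound
   phi(tau^(-alpha) x) <= 2^(n+1) Lambda_upper tau^n phi(x) for tau >= 1, which absorbs the
   factor ((t-r)/diam Omega)^alpha. *)

section \<open>Young functions\<close>

lemma young_function_pos:
  assumes "young_function \<phi>" "0 < x"
  shows "0 < \<phi> x"
  using assms unfolding young_function_def by blast

lemma young_function_scale_le:
  assumes "young_function \<phi>" "0 \<le> c" "c \<le> 1" "0 \<le> x"
  shows "\<phi> (c * x) \<le> c * \<phi> x"
proof -
  have "convex_on {0..} \<phi>" "\<phi> 0 = 0"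
    using assms(1) unfolding young_function_def by auto
  then show ?thesis
    using convex_onD[of "{0..}" \<phi> c 0 x] assms(2-4) by simp
qed

lemma young_function_less:
  assumes "young_function \<phi>" "0 \<le> a" "a < b"
  shows "\<phi> a < \<phi> b"
proof -
  have "\<phi> a = \<phi> (a / b * b)"
    using assms by simp
  also have "\<dots> \<le> a / b * \<phi> b"
    using assms by (intro young_function_scale_le) auto
  also have "\<dots> < 1 * \<phi> b"
    using assms young_function_pos[of \<phi> b] by (intro mult_strict_right_mono) auto
  finally show ?thesis by simp
qed

lemma young_function_mono:
  assumes "young_function \<phi>" "0 \<le> a" "a \<le> b"
  shows "\<phi> a \<le> \<phi> b"
  using young_function_less[OF assms(1,2), of b] assms(3) by (cases "a = b") auto

lemma young_function_nonneg:
  assumes "young_function \<phi>" "0 \<le> x"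
  shows "0 \<le> \<phi> x"
  using young_function_mono[OF assms(1) order_refl assms(2)] assms(1)
  by (simp add: young_function_def)

lemma borel_measurable_young_function:
  assumes "young_function \<phi>"
  shows "(\<lambda>x. \<phi> (max 0 x)) \<in> borel_measurable borel"
proof -
  have "continuous_on {0..} \<phi>"
    using assms unfolding young_function_def by blast
  then have "continuous_on UNIV (\<lambda>x::real. \<phi> (max 0 x))"
    by (rule continuous_on_compose2) (auto intro!: continuous_intros)
  then show ?thesis
    by (rule borel_measurable_continuous_onI)
qed

lemma borel_measurable_young_function_comp:
  assumes "young_function \<phi>" "g \<in> borel_measurable M" "\<And>x. 0 \<le> g x"
  shows "(\<lambda>x. \<phi> (g x)) \<in> borel_measurable M"
  using measurable_compose[OF assms(2) borel_measurable_young_function[OF assms(1)]] assms(3)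
  by (simp add: max_absorb2)

lemma young_function_surj:
  assumes "young_function \<phi>" "0 \<le> v"
  obtains y where "0 \<le> y" "\<phi> y = v"
proof -
  have "filterlim \<phi> at_top at_top"
    using assms(1) unfolding young_function_def by blast
  then obtain b where b: "\<And>x. b \<le> x \<Longrightarrow> v \<le> \<phi> x"
    unfolding filterlim_at_top eventually_at_top_linorder by blast
  have "continuous_on {0..max 0 b} \<phi>"
    using assms(1) continuous_on_subset[of "{0..}" \<phi>] unfolding young_function_def by auto
  moreover have "\<phi> 0 \<le> v"
    using assms unfolding young_function_def by simp
  moreover have "v \<le> \<phi> (max 0 b)"
    by (rule b) simp
  ultimately have "\<exists>y\<ge>0. y \<le> max 0 b \<and> \<phi> y = v"
    by (intro IVT') simp_all
  then show ?thesis
    using that by blast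
qed

lemma phi_inv_eqI:
  assumes "young_function \<phi>" "0 \<le> y" "\<phi> y = v"
  shows "phi_inv \<phi> v = y"
  unfolding phi_inv_def
proof (rule the_equality)
  show "0 \<le> y \<and> \<phi> y = v"
    using assms by simp
  show "z = y" if z: "0 \<le> z \<and> \<phi> z = v" for z
  proof (rule linorder_cases[of z y])
    assume "z < y"
    then have "\<phi> z < \<phi> y"
      using young_function_less[OF assms(1)] z by blast
    then show ?thesis
      using z assms by simp
  next
    assume "y < z"
    then have "\<phi> y < \<phi> z"
      using young_function_less[OF assms(1,2)] by blast
    then show ?thesis
      using z assms by simp
  qed
qed

lemma phi_phi_inv:
  assumes "young_function \<phi>" "0 \<le> v"
  shows "\<phi> (phi_inv \<phi> v) = v"
proof -
  obtain y where "0 \<le> y" "\<phi> y = v"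
    using young_function_surj[OF assms] .
  then show ?thesis
    using phi_inv_eqI[OF assms(1)] by simp
qed

lemma phi_inv_pos:
  assumes "young_function \<phi>" "0 < v"
  shows "0 < phi_inv \<phi> v"
proof -
  obtain y where y: "0 \<le> y" "\<phi> y = v"
    using young_function_surj[OF assms(1) less_imp_le[OF assms(2)]] .
  moreover have "y \<noteq> 0"
    using y assms unfolding young_function_def by auto
  ultimately show ?thesis
    using phi_inv_eqI[OF assms(1) y] by simp
qed

lemma Lambda_upper_growth:
  assumes yf: "young_function \<phi>" and "\<alpha> < 0" "1 \<le> \<tau>" "0 < x"
    and fin: "Lambda_upper \<phi> n \<alpha> < \<infinity>"
  shows "\<phi> (\<tau> powr (- \<alpha>) * x) \<le> 2 ^ (n + 1) * enn2real (Lambda_upper \<phi> n \<alpha>) * \<tau> ^ n * \<phi> x"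
proof -
  \<comment> \<open>on \<open>[\<tau>, 2 * \<tau>]\<close>, an interval of length \<open>\<tau>\<close>, the integrand of \<open>Lambda_upper\<close> is at least \<open>c\<close>\<close>
  define c where "c = \<phi> (\<tau> powr (- \<alpha>) * x) / \<phi> x / (2 * \<tau>) ^ (n + 1)"
  have px: "0 < \<phi> x"
    using young_function_pos[OF yf] assms by blast
  have c: "0 \<le> c"
    unfolding c_def using px assms young_function_nonneg[OF yf, of "\<tau> powr (- \<alpha>) * x"] by simp
  have "ennreal (c * \<tau>) = (\<integral>\<^sup>+t. ennreal c * indicator {\<tau>..2*\<tau>} t \<partial>lborel)"
    using assms c by (simp add: nn_integral_cmult_indicator ennreal_mult)
  also have "\<dots> \<le> (\<integral>\<^sup>+t\<in>{1..}. ennreal (\<phi> (t powr (- \<alpha>) * x) / \<phi> x / t ^ (n + 1)) \<partial>lborel)"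
  proof (intro nn_integral_mono)
    fix t :: real
    show "ennreal c * indicator {\<tau>..2*\<tau>} t
      \<le> ennreal (\<phi> (t powr (- \<alpha>) * x) / \<phi> x / t ^ (n + 1)) * indicator {1..} t"
    proof (cases "\<tau> \<le> t \<and> t \<le> 2 * \<tau>")
      case True
      have "t ^ (n + 1) \<le> (2 * \<tau>) ^ (n + 1)"
        using True assms by (intro power_mono) auto
      then have "c \<le> \<phi> (\<tau> powr (- \<alpha>) * x) / \<phi> x / t ^ (n + 1)"
        unfolding c_def using True assms px young_function_nonneg[OF yf, of "\<tau> powr (- \<alpha>) * x"]
        by (intro divide_left_mono) auto
      also have "\<dots> \<le> \<phi> (t powr (- \<alpha>) * x) / \<phi> x / t ^ (n + 1)"
        using True assms px
        by (intro divide_right_mono young_function_mono[OF yf] mult_right_mono powr_mono2) auto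
      finally show ?thesis
        using True assms by (simp add: ennreal_leI)
    qed simp
  qed
  also have "\<dots> \<le> Lambda_upper \<phi> n \<alpha>"
    unfolding Lambda_upper_def using assms by (intro SUP_upper) auto
  finally have "enn2real (ennreal (c * \<tau>)) \<le> enn2real (Lambda_upper \<phi> n \<alpha>)"
    using fin by (intro enn2real_mono) simp_all
  then have "c * \<tau> \<le> enn2real (Lambda_upper \<phi> n \<alpha>)"
    using c assms by simp
  then show ?thesis
    unfolding c_def using px assms by (simp add: field_simps power_mult_distrib)
qed

lemma orlicz_norm_le:
  assumes "0 < lam" "orlicz_modular \<Omega> \<phi> u lam \<le> 1"
  shows "orlicz_norm \<Omega> \<phi> u \<le> lam"
  unfolding orlicz_norm_def
  by (rule cInf_lower) (use assms in \<open>auto intro!: bdd_belowI[where m=0]\<close>)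

lemma besov_seminorm_le:
  assumes "0 < lam" "besov_modular \<Omega> \<alpha> \<phi> u lam \<le> 1"
  shows "besov_seminorm \<Omega> \<alpha> \<phi> u \<le> lam"
  unfolding besov_seminorm_def
  by (rule cInf_lower) (use assms in \<open>auto intro!: bdd_belowI[where m=0]\<close>)

lemma besov_space_norm_le:
  assumes "u \<in> borel_measurable (lebesgue_on \<Omega>)" "0 < a" "0 < b"
    and "orlicz_modular \<Omega> \<phi> u a \<le> 1" "besov_modular \<Omega> \<alpha> \<phi> u b \<le> 1"
  shows "u \<in> besov_space \<Omega> \<alpha> \<phi>" "besov_norm \<Omega> \<alpha> \<phi> u \<le> a + b"
  using assms unfolding besov_space_def besov_norm_def
  by (blast, intro add_mono orlicz_norm_le besov_seminorm_le)

section \<open>The cut-off function\<close>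

lemma abs_clamp_diff_le:
  fixes p q :: real
  shows "\<bar>max 0 (min 1 p) - max 0 (min 1 q)\<bar> \<le> min 1 \<bar>p - q\<bar>"
  unfolding min_def max_def abs_le_iff by (simp split: if_splits, linarith)

lemma cutoff_eq_clamp:
  assumes "r < t"
  shows "cutoff x r t z = max 0 (min 1 ((t - dist x z) / (t - r)))"
proof -
  consider "dist x z < r" | "r \<le> dist x z" "dist x z < t" | "t \<le> dist x z"
    by linarith
  then show ?thesis
  proof cases
    case 1
    then have "1 \<le> (t - dist x z) / (t - r)"
      using assms by simp
    then show ?thesis
      using 1 unfolding cutoff_def by simp
  next
    case 2
    then have "(t - dist x z) / (t - r) \<le> 1" "0 \<le> (t - dist x z) / (t - r)"
      using assms by simp_all
    then show ?thesis
      using 2 unfolding cutoff_def by simp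
  next
    case 3
    then have "(t - dist x z) / (t - r) \<le> 0"
      using assms by (simp add: divide_nonpos_pos)
    then show ?thesis
      using 3 assms unfolding cutoff_def by simp
  qed
qed

lemma cutoff_nonneg: "r < t \<Longrightarrow> 0 \<le> cutoff x r t z"
  and cutoff_le_1: "r < t \<Longrightarrow> cutoff x r t z \<le> 1"
  and cutoff_eq_0: "r < t \<Longrightarrow> z \<notin> ball x t \<Longrightarrow> cutoff x r t z = 0"
  by (simp_all add: cutoff_eq_clamp divide_nonpos_pos)

lemma cutoff_diff_le:
  assumes "r < t"
  shows "\<bar>cutoff x r t a - cutoff x r t b\<bar> \<le> min 1 (dist a b / (t - r))"
proof -
  have "\<bar>(t - dist x a) / (t - r) - (t - dist x b) / (t - r)\<bar> = \<bar>dist x b - dist x a\<bar> / (t - r)"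
    using assms by (simp add: diff_divide_distrib[symmetric] abs_divide)
  also have "\<dots> \<le> dist a b / (t - r)"
    using assms dist_triangle3[of x a b] dist_triangle3[of x b a]
    by (intro divide_right_mono) (auto simp: dist_commute)
  finally show ?thesis
    using abs_clamp_diff_le[of "(t - dist x a) / (t - r)" "(t - dist x b) / (t - r)"] assms
    unfolding cutoff_eq_clamp[OF assms] by linarith
qed

lemma continuous_on_cutoff:
  assumes "r < t"
  shows "continuous_on S (cutoff x r t)"
  unfolding cutoff_eq_clamp[OF assms, abs_def] using assms by (intro continuous_intros) auto

section \<open>Radial and translation-invariant integrals\<close>

lemma emeasure_density_power_atMost:
  fixes c :: real and n :: nat
  assumes "0 \<le> c" "1 \<le> n"
  shows "emeasure (density lborel (\<lambda>\<rho>. ennreal (n * c * \<rho> ^ (n - 1)) * indicator {0..} \<rho>)) {..b}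
     = ennreal (if b < 0 then 0 else c * b ^ n)"
proof -
  have "emeasure (density lborel (\<lambda>\<rho>. ennreal (n * c * \<rho> ^ (n - 1)) * indicator {0..} \<rho>)) {..b}
     = (\<integral>\<^sup>+\<rho>. ennreal (n * c * \<rho> ^ (n - 1)) * indicator {0..} \<rho> * indicator {..b} \<rho> \<partial>lborel)"
    by (rule emeasure_density) measurable
  also have "\<dots> = (\<integral>\<^sup>+\<rho>. ennreal (n * c * \<rho> ^ (n - 1)) * indicator {0..b} \<rho> \<partial>lborel)"
    by (intro nn_integral_cong) (auto split: split_indicator)
  also have "\<dots> = ennreal (if b < 0 then 0 else c * b ^ n)"
  proof (cases "b < 0")
    case False
    have "(\<integral>\<^sup>+\<rho>. ennreal (n * c * \<rho> ^ (n - 1)) * indicator {0..b} \<rho> \<partial>lborel) = ennreal (c * b ^ n - c * 0 ^ n)"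
    proof (rule nn_integral_FTC_Icc)
      show "(\<lambda>\<rho>. n * c * \<rho> ^ (n - 1)) \<in> borel_measurable borel"
        by (intro borel_measurable_continuous_onI continuous_intros)
      show "((\<lambda>\<rho>. c * \<rho> ^ n) has_real_derivative n * c * \<rho> ^ (n - 1)) (at \<rho>)" for \<rho>
        by (auto intro!: derivative_eq_intros)
    qed (use False assms in auto)
    moreover have "(0::real) ^ n = 0"
      using assms by simp
    ultimately show ?thesis
      using False by simp
  qed (simp add: indicator_def)
  finally show ?thesis .
qed

lemma emeasure_distr_norm_atMost:
  "emeasure (distr lborel borel (norm :: 'a::euclidean_space \<Rightarrow> real)) {..b}
    = ennreal (if b < 0 then 0 else measure lborel (ball (0::'a) 1) * b ^ DIM('a))"
proof -
  have "(norm :: 'a \<Rightarrow> real) -` {..b} \<inter> space lborel = cball 0 b"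
    by auto
  then have "emeasure (distr lborel borel (norm :: 'a \<Rightarrow> real)) {..b} = emeasure lborel (cball (0::'a) b)"
    using emeasure_distr[of "norm :: 'a \<Rightarrow> real" lborel borel "{..b}"] by simp
  also have "\<dots> = ennreal (measure lborel (cball (0::'a) b))"
    using emeasure_lborel_cball_finite[of "0::'a" b] by (simp add: emeasure_eq_ennreal_measure)
  also have "measure lborel (cball (0::'a) b) = (if b < 0 then 0 else measure lborel (ball (0::'a) 1) * b ^ DIM('a))"
  proof (cases "b < 0")
    case False
    then show ?thesis
      using content_ball_conv_unit_ball[of b "0::'a"] by (simp add: content_cball_conv_ball)
  qed simp
  finally show ?thesis .
qed

lemma distr_norm_lborel:
  "distr lborel borel (norm :: 'a::euclidean_space \<Rightarrow> real)
     = density lborel (\<lambda>\<rho>. ennreal (DIM('a) * measure lborel (ball (0::'a) 1) * \<rho> ^ (DIM('a) - 1)) * indicator {0..} \<rho>)"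
  (is "?M = ?N")
proof (rule measure_eqI_generator_eq_countable[where E="range atMost" and \<Omega>=UNIV and A="range (\<lambda>k::nat. {..real k})"])
  show "Int_stable (range atMost :: real set set)"
    by (auto simp: Int_stable_def intro!: range_eqI[where x="min _ _"])
  have "sets (borel :: real measure) = sigma_sets UNIV (range atMost)"
    by (subst borel_eq_atMost) (simp add: atMost_def)
  then show "sets ?M = sigma_sets UNIV (range atMost)" "sets ?N = sigma_sets UNIV (range atMost)"
    by auto
  have M: "emeasure ?M {..b} = ennreal (if b < 0 then 0 else measure lborel (ball (0::'a) 1) * b ^ DIM('a))" for b
    by (rule emeasure_distr_norm_atMost)
  have N: "emeasure ?N {..b} = ennreal (if b < 0 then 0 else measure lborel (ball (0::'a) 1) * b ^ DIM('a))" for b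
    by (rule emeasure_density_power_atMost) (auto simp: Suc_le_eq)
  show "emeasure ?M X = emeasure ?N X" if "X \<in> range atMost" for X
    using that M N by auto
  show "emeasure ?M X \<noteq> \<infinity>" if "X \<in> range (\<lambda>k::nat. {..real k})" for X
    using that M by auto
  show "\<Union> (range (\<lambda>k::nat. {..real k})) = UNIV"
    by (auto intro: real_arch_simple)
qed auto

lemma nn_integral_radial:
  fixes g :: "real \<Rightarrow> ennreal"
  assumes "g \<in> borel_measurable borel"
  shows "(\<integral>\<^sup>+z. g (norm (z::'a::euclidean_space)) \<partial>lborel) =
    (\<integral>\<^sup>+\<rho>\<in>{0..}. ennreal (DIM('a) * measure lborel (ball (0::'a) 1) * \<rho> ^ (DIM('a) - 1)) * g \<rho> \<partial>lborel)"
proof -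
  have "(\<integral>\<^sup>+z. g (norm (z::'a)) \<partial>lborel) = (\<integral>\<^sup>+\<rho>. g \<rho> \<partial>distr lborel borel (norm :: 'a \<Rightarrow> real))"
    using assms by (subst nn_integral_distr) auto
  also have "\<dots> = (\<integral>\<^sup>+\<rho>\<in>{0..}. ennreal (DIM('a) * measure lborel (ball (0::'a) 1) * \<rho> ^ (DIM('a) - 1)) * g \<rho> \<partial>lborel)"
    using assms unfolding distr_norm_lborel
    by (subst nn_integral_density) (auto intro!: nn_integral_cong simp: mult.commute mult.left_commute)
  finally show ?thesis .
qed

lemma nn_integral_lborel_translate:
  fixes H :: "'a::euclidean_space \<Rightarrow> ennreal"
  assumes "H \<in> borel_measurable borel"
  shows "(\<integral>\<^sup>+b. H (c + b) \<partial>lborel) = (\<integral>\<^sup>+z. H z \<partial>lborel)"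
  using assms by (subst lborel_distr_plus[symmetric, of c]) (simp add: nn_integral_distr)

lemma nn_integral_indicator_convolution:
  fixes H :: "'a::euclidean_space \<Rightarrow> ennreal"
  assumes H[measurable]: "H \<in> borel_measurable borel" and B[measurable]: "B \<in> sets lborel"
    and H_even: "\<And>z. H (- z) = H z"
  shows "(\<integral>\<^sup>+a. (\<integral>\<^sup>+b. (indicator B a + indicator B b) * H (a - b) \<partial>lborel) \<partial>lborel)
       = 2 * emeasure lborel B * (\<integral>\<^sup>+z. H z \<partial>lborel)"
proof -
  define J where "J = (\<integral>\<^sup>+z. H z \<partial>lborel)"
  have J_a: "(\<integral>\<^sup>+b. H (a - b) \<partial>lborel) = J" for a
  proof -
    have "(\<integral>\<^sup>+b. H (a - b) \<partial>lborel) = (\<integral>\<^sup>+b. H (- a + b) \<partial>lborel)"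
      using H_even[of "a - _"] by simp
    then show ?thesis
      using nn_integral_lborel_translate[OF H, of "- a"] unfolding J_def by simp
  qed
  have J_b: "(\<integral>\<^sup>+a. H (a - b) \<partial>lborel) = J" for b
    using nn_integral_lborel_translate[OF H, of "- b"] by (simp add: J_def)
  have "(\<integral>\<^sup>+a. (\<integral>\<^sup>+b. (indicator B a + indicator B b) * H (a - b) \<partial>lborel) \<partial>lborel)
      = (\<integral>\<^sup>+a. (\<integral>\<^sup>+b. indicator B a * H (a - b) \<partial>lborel) + (\<integral>\<^sup>+b. indicator B b * H (a - b) \<partial>lborel) \<partial>lborel)"
    by (simp add: distrib_right nn_integral_add)
  also have "\<dots> = (\<integral>\<^sup>+a. indicator B a * J \<partial>lborel) + (\<integral>\<^sup>+a. (\<integral>\<^sup>+b. indicator B b * H (a - b) \<partial>lborel) \<partial>lborel)"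
    by (simp add: nn_integral_add nn_integral_cmult J_a)
  also have "(\<integral>\<^sup>+a. (\<integral>\<^sup>+b. indicator B b * H (a - b) \<partial>lborel) \<partial>lborel)
      = (\<integral>\<^sup>+b. (\<integral>\<^sup>+a. indicator B b * H (a - b) \<partial>lborel) \<partial>lborel)"
    by (rule lborel_pair.Fubini'[symmetric]) measurable
  also have "\<dots> = (\<integral>\<^sup>+b. indicator B b * J \<partial>lborel)"
    by (simp add: nn_integral_cmult J_b)
  finally show ?thesis
    by (simp add: nn_integral_multc J_def mult_2 distrib_right nn_integral_indicator[OF B])
qed

lemma measure_open_inter_ball_pos:
  assumes "open \<Omega>" "x \<in> \<Omega>" "0 < t"
  shows "0 < measure lebesgue (\<Omega> \<inter> ball x t)"
proof -
  have "open (\<Omega> \<inter> ball x t)" "x \<in> \<Omega> \<inter> ball x t"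
    using assms by auto
  then obtain e where "0 < e" "ball x e \<subseteq> \<Omega> \<inter> ball x t"
    by (meson open_contains_ball)
  moreover have "\<Omega> \<inter> ball x t \<in> lmeasurable"
    using assms by (intro bounded_set_imp_lmeasurable bounded_Int) auto
  ultimately have "measure lebesgue (ball x e) \<le> measure lebesgue (\<Omega> \<inter> ball x t)"
    by (intro measure_mono_fmeasurable) auto
  then have "measure lborel (ball x e) \<le> measure lebesgue (\<Omega> \<inter> ball x t)"
    by simp
  then show ?thesis
    using content_ball_pos[OF \<open>0 < e\<close>, of x] by linarith
qed

lemma emeasure_inter_ball:
  assumes "\<Omega> \<in> sets lborel"
  shows "emeasure lborel (\<Omega> \<inter> ball x t) = ennreal (measure lebesgue (\<Omega> \<inter> ball x t))"
proof -
  have "emeasure lborel (\<Omega> \<inter> ball x t) < \<infinity>"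
    by (rule le_less_trans[OF emeasure_mono[of _ "ball x t"] emeasure_lborel_ball_finite]) auto
  then show ?thesis
    using assms by (simp add: emeasure_eq_ennreal_measure)
qed

section \<open>The Besov profile\<close>

text \<open>\<open>besov_profile \<phi> \<alpha> lam s \<rho>\<close> bounds \<open>\<phi> (\<bar>u a - u b\<bar> / (lam * \<rho> powr \<alpha>))\<close> for \<open>\<rho> = norm (a - b)\<close>
  whenever \<open>\<bar>u a - u b\<bar> \<le> min 1 (\<rho> / s)\<close>; the \<open>max 0\<close> only serves measurability.\<close>

definition besov_profile :: "(real \<Rightarrow> real) \<Rightarrow> real \<Rightarrow> real \<Rightarrow> real \<Rightarrow> real \<Rightarrow> real" where
  "besov_profile \<phi> \<alpha> lam s \<rho> = \<phi> (max 0 (min 1 (\<rho> / s) * \<rho> powr (- \<alpha>) / lam))"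

lemma borel_measurable_besov_profile:
  assumes "young_function \<phi>"
  shows "besov_profile \<phi> \<alpha> lam s \<in> borel_measurable borel"
proof -
  have [measurable]: "(\<lambda>x. \<phi> (max 0 x)) \<in> borel_measurable borel"
    using borel_measurable_young_function[OF assms] .
  show ?thesis
    unfolding besov_profile_def[abs_def] by measurable
qed

lemma besov_profile_nonneg:
  "young_function \<phi> \<Longrightarrow> 0 \<le> besov_profile \<phi> \<alpha> lam s \<rho>"
  unfolding besov_profile_def by (simp add: young_function_nonneg)

lemma besov_profile_rescale:
  "besov_profile \<phi> \<alpha> lam s (s * \<tau>) = besov_profile \<phi> \<alpha> (lam / s powr (- \<alpha>)) 1 \<tau>"
  if "0 < s"
  using that by (simp add: besov_profile_def powr_mult divide_divide_eq_right mult_ac)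

lemma nn_integral_besov_profile_rescale:
  assumes yf: "young_function \<phi>" and s: "0 < s"
  shows "(\<integral>\<^sup>+\<rho>\<in>{0<..}. ennreal (besov_profile \<phi> \<alpha> lam s \<rho> / \<rho> ^ (n + 1)) \<partial>lborel)
    = ennreal (1 / s ^ n) *
      (\<integral>\<^sup>+\<tau>\<in>{0<..}. ennreal (besov_profile \<phi> \<alpha> (lam / s powr (- \<alpha>)) 1 \<tau> / \<tau> ^ (n + 1)) \<partial>lborel)"
    (is "?L = _ * (\<integral>\<^sup>+\<tau>. ?g \<tau> \<partial>lborel)")
proof -
  have [measurable]: "besov_profile \<phi> \<alpha> lam s \<in> borel_measurable borel"
    "besov_profile \<phi> \<alpha> (lam / s powr (- \<alpha>)) 1 \<in> borel_measurable borel"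
    using borel_measurable_besov_profile[OF yf] by blast+
  define f where "f \<rho> = ennreal (besov_profile \<phi> \<alpha> lam s \<rho> / \<rho> ^ (n + 1)) * indicator {0<..} \<rho>" for \<rho>
  have "?L = ennreal \<bar>s\<bar> * (\<integral>\<^sup>+\<tau>. f (0 + s * \<tau>) \<partial>lborel)"
    unfolding f_def using s by (intro nn_integral_real_affine) auto
  also have "\<dots> = (\<integral>\<^sup>+\<tau>. ennreal s * f (s * \<tau>) \<partial>lborel)"
    using s unfolding f_def by (subst nn_integral_cmult) auto
  also have "\<dots> = (\<integral>\<^sup>+\<tau>. ennreal (1 / s ^ n) * ?g \<tau> \<partial>lborel)"
  proof (intro nn_integral_cong)
    fix \<tau> :: real
    show "ennreal s * f (s * \<tau>) = ennreal (1 / s ^ n) * ?g \<tau>"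
    proof (cases "0 < \<tau>")
      case True
      have "s * (besov_profile \<phi> \<alpha> lam s (s * \<tau>) / (s * \<tau>) ^ (n + 1))
          = 1 / s ^ n * (besov_profile \<phi> \<alpha> (lam / s powr (- \<alpha>)) 1 \<tau> / \<tau> ^ (n + 1))"
        unfolding besov_profile_rescale[OF s] using s True by (simp add: power_mult_distrib field_simps)
      then show ?thesis
        using s True besov_profile_nonneg[OF yf]
        by (simp add: f_def ennreal_mult'[symmetric] zero_less_mult_iff)
    next
      case False
      then show ?thesis
        using s by (simp add: f_def zero_less_mult_iff)
    qed
  qed
  also have "\<dots> = ennreal (1 / s ^ n) * (\<integral>\<^sup>+\<tau>. ?g \<tau> \<partial>lborel)"
    by (rule nn_integral_cmult) measurable
  finally show ?thesis .
qed

lemma besov_profile_unit_scale: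
  assumes "0 < mu" "0 < \<tau>"
  shows "besov_profile \<phi> \<alpha> mu 1 \<tau>
    = \<phi> ((if \<tau> \<le> 1 then \<tau> powr (1 - \<alpha>) else \<tau> powr (- \<alpha>)) * (1 / mu))"
  using assms by (simp add: besov_profile_def powr_diff powr_minus field_simps)

lemma nn_integral_besov_profile_le_Lambda:
  assumes yf: "young_function \<phi>" and mu: "0 < mu"
  shows "(\<integral>\<^sup>+\<tau>\<in>{0<..}. ennreal (besov_profile \<phi> \<alpha> mu 1 \<tau> / \<tau> ^ (n + 1)) \<partial>lborel)
    \<le> ennreal (\<phi> (1 / mu)) * (Lambda_lower \<phi> n \<alpha> + Lambda_upper \<phi> n \<alpha>)"
proof -
  define X where "X = 1 / mu"
  have X: "0 < X" "0 < \<phi> X"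
    using mu young_function_pos[OF yf] by (auto simp: X_def)
  define low where "low \<tau> = ennreal (\<phi> (\<tau> powr (1 - \<alpha>) * X) / \<phi> X / \<tau> ^ (n + 1))" for \<tau>
  define up where "up \<tau> = ennreal (\<phi> (\<tau> powr (- \<alpha>) * X) / \<phi> X / \<tau> ^ (n + 1))" for \<tau>
  have [measurable]: "(\<lambda>\<tau>. \<phi> (\<tau> powr (1 - \<alpha>) * X)) \<in> borel_measurable borel"
    "(\<lambda>\<tau>. \<phi> (\<tau> powr (- \<alpha>) * X)) \<in> borel_measurable borel"
    using X by (auto intro!: borel_measurable_young_function_comp[OF yf])
  have "(\<integral>\<^sup>+\<tau>\<in>{0<..}. ennreal (besov_profile \<phi> \<alpha> mu 1 \<tau> / \<tau> ^ (n + 1)) \<partial>lborel)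
      \<le> (\<integral>\<^sup>+\<tau>. ennreal (\<phi> X) * (low \<tau> * indicator {0<..1} \<tau> + up \<tau> * indicator {1..} \<tau>) \<partial>lborel)"
  proof (intro nn_integral_mono)
    fix \<tau> :: real
    have split: "ennreal (\<phi> Y / \<tau> ^ (n + 1)) = ennreal (\<phi> X) * ennreal (\<phi> Y / \<phi> X / \<tau> ^ (n + 1))"
      if "0 \<le> Y" "0 < \<tau>" for Y
      using X that young_function_nonneg[OF yf \<open>0 \<le> Y\<close>] by (simp add: ennreal_mult[symmetric])
    consider "\<tau> \<le> 0" | "0 < \<tau>" "\<tau> \<le> 1" | "1 < \<tau>"
      by linarith
    then show "ennreal (besov_profile \<phi> \<alpha> mu 1 \<tau> / \<tau> ^ (n + 1)) * indicator {0<..} \<tau>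
      \<le> ennreal (\<phi> X) * (low \<tau> * indicator {0<..1} \<tau> + up \<tau> * indicator {1..} \<tau>)"
    proof cases
      case 2
      then show ?thesis
        using X split[of "\<tau> powr (1 - \<alpha>) * X"] besov_profile_unit_scale[OF mu, of \<tau> \<phi> \<alpha>]
        by (simp add: low_def distrib_left X_def)
    next
      case 3
      then show ?thesis
        using X split[of "\<tau> powr (- \<alpha>) * X"] besov_profile_unit_scale[OF mu, of \<tau> \<phi> \<alpha>]
        by (simp add: up_def distrib_left X_def)
    qed simp
  qed
  also have "\<dots> = ennreal (\<phi> X) *
      ((\<integral>\<^sup>+\<tau>\<in>{0<..1}. low \<tau> \<partial>lborel) + (\<integral>\<^sup>+\<tau>\<in>{1..}. up \<tau> \<partial>lborel))"
    unfolding low_def up_def by (simp add: nn_integral_cmult nn_integral_add)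
  also have "\<dots> \<le> ennreal (\<phi> X) * (Lambda_lower \<phi> n \<alpha> + Lambda_upper \<phi> n \<alpha>)"
    unfolding low_def up_def Lambda_lower_def Lambda_upper_def using X
    by (intro mult_left_mono add_mono SUP_upper) auto
  finally show ?thesis
    by (simp add: X_def)
qed

lemma nn_integral_besov_profile_polar:
  assumes yf: "young_function \<phi>"
  shows "(\<integral>\<^sup>+z. ennreal (besov_profile \<phi> \<alpha> lam s (norm z) / norm (z::'a::euclidean_space) ^ (2 * DIM('a))) \<partial>lborel)
    = ennreal (DIM('a) * measure lborel (ball (0::'a) 1)) *
      (\<integral>\<^sup>+\<rho>\<in>{0<..}. ennreal (besov_profile \<phi> \<alpha> lam s \<rho> / \<rho> ^ (DIM('a) + 1)) \<partial>lborel)"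
proof -
  define n where "n = DIM('a)"
  define w where "w = measure lborel (ball (0::'a) 1)"
  have n: "1 \<le> n"
    by (simp add: n_def Suc_le_eq)
  have [measurable]: "besov_profile \<phi> \<alpha> lam s \<in> borel_measurable borel"
    using borel_measurable_besov_profile[OF yf] .
  have "(\<integral>\<^sup>+z. ennreal (besov_profile \<phi> \<alpha> lam s (norm z) / norm (z::'a) ^ (2 * n)) \<partial>lborel)
      = (\<integral>\<^sup>+\<rho>\<in>{0..}. ennreal (n * w * \<rho> ^ (n - 1)) * ennreal (besov_profile \<phi> \<alpha> lam s \<rho> / \<rho> ^ (2 * n)) \<partial>lborel)"
    unfolding n_def w_def by (rule nn_integral_radial) measurable
  also have "\<dots> = (\<integral>\<^sup>+\<rho>. ennreal (n * w) * (ennreal (besov_profile \<phi> \<alpha> lam s \<rho> / \<rho> ^ (n + 1)) * indicator {0<..} \<rho>) \<partial>lborel)"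
  proof (intro nn_integral_cong)
    fix \<rho> :: real
    have "2 * n = (n - 1) + (n + 1)"
      using n by simp
    then have "\<rho> ^ (2 * n) = \<rho> ^ (n - 1) * \<rho> ^ (n + 1)"
      by (simp only: power_add)
    then show "ennreal (n * w * \<rho> ^ (n - 1)) * ennreal (besov_profile \<phi> \<alpha> lam s \<rho> / \<rho> ^ (2 * n)) * indicator {0..} \<rho>
      = ennreal (n * w) * (ennreal (besov_profile \<phi> \<alpha> lam s \<rho> / \<rho> ^ (n + 1)) * indicator {0<..} \<rho>)"
      using n besov_profile_nonneg[OF yf, of \<alpha> lam s \<rho>]
      by (cases "0 < \<rho>") (auto simp: indicator_def w_def ennreal_mult'[symmetric] mult_ac)
  qed
  finally show ?thesis
    by (simp add: nn_integral_cmult n_def w_def)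
qed

lemma nn_integral_besov_profile_radial_le:
  assumes yf: "young_function \<phi>" and s: "0 < s" and lam: "0 < lam"
  shows "(\<integral>\<^sup>+z. ennreal (besov_profile \<phi> \<alpha> lam s (norm z) / norm (z::'a::euclidean_space) ^ (2 * DIM('a))) \<partial>lborel)
    \<le> ennreal (DIM('a) * measure lborel (ball (0::'a) 1) * \<phi> (s powr (- \<alpha>) / lam) / s ^ DIM('a)) *
      (Lambda_lower \<phi> DIM('a) \<alpha> + Lambda_upper \<phi> DIM('a) \<alpha>)"
proof -
  define n where "n = DIM('a)"
  define w where "w = measure lborel (ball (0::'a) 1)"
  have "(\<integral>\<^sup>+z. ennreal (besov_profile \<phi> \<alpha> lam s (norm z) / norm (z::'a) ^ (2 * n)) \<partial>lborel)
      = ennreal (n * w) * (ennreal (1 / s ^ n) *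
        (\<integral>\<^sup>+\<tau>\<in>{0<..}. ennreal (besov_profile \<phi> \<alpha> (lam / s powr (- \<alpha>)) 1 \<tau> / \<tau> ^ (n + 1)) \<partial>lborel))"
    unfolding n_def w_def nn_integral_besov_profile_polar[OF yf] nn_integral_besov_profile_rescale[OF yf s] ..
  also have "\<dots> \<le> ennreal (n * w) * (ennreal (1 / s ^ n) * (ennreal (\<phi> (s powr (- \<alpha>) / lam)) *
      (Lambda_lower \<phi> n \<alpha> + Lambda_upper \<phi> n \<alpha>)))"
    using nn_integral_besov_profile_le_Lambda[OF yf, of "lam / s powr (- \<alpha>)" \<alpha> n] s lam
    by (intro mult_left_mono) auto
  also have "\<dots> = ennreal (n * w * \<phi> (s powr (- \<alpha>) / lam) / s ^ n) *
      (Lambda_lower \<phi> n \<alpha> + Lambda_upper \<phi> n \<alpha>)"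
    using s lam young_function_nonneg[OF yf, of "s powr (- \<alpha>) / lam"]
    by (simp add: w_def ennreal_mult'[symmetric] mult.assoc[symmetric])
  finally show ?thesis
    by (simp add: n_def w_def)
qed

section \<open>Modular estimates for the cut-off\<close>

lemma cutoff_diff_quotient_le:
  assumes yf: "young_function \<phi>" and "r < t" "0 < lam"
  shows "\<phi> (\<bar>cutoff x r t a - cutoff x r t b\<bar> / (lam * norm (a - b) powr \<alpha>))
    \<le> besov_profile \<phi> \<alpha> lam (t - r) (norm (a - b))"
proof (cases "a = b")
  case True
  then show ?thesis
    using yf besov_profile_nonneg[OF yf] by (simp add: young_function_def)
next
  case False
  define \<rho> where "\<rho> = norm (a - b)"
  define d where "d = \<bar>cutoff x r t a - cutoff x r t b\<bar>"
  have \<rho>: "0 < \<rho>"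
    using False by (simp add: \<rho>_def)
  have d: "0 \<le> d" "d \<le> min 1 (\<rho> / (t - r))"
    using cutoff_diff_le[OF assms(2), of x a b] by (simp_all add: d_def \<rho>_def dist_norm)
  have "d / (lam * \<rho> powr \<alpha>) = d * \<rho> powr (- \<alpha>) / lam"
    using \<rho> assms by (simp add: powr_minus field_simps)
  also have "\<dots> \<le> max 0 (min 1 (\<rho> / (t - r)) * \<rho> powr (- \<alpha>) / lam)"
    using d assms by (intro max.coboundedI2 divide_right_mono mult_right_mono) simp_all
  finally have "\<phi> (d / (lam * \<rho> powr \<alpha>)) \<le> \<phi> (max 0 (min 1 (\<rho> / (t - r)) * \<rho> powr (- \<alpha>) / lam))"
    using d \<rho> assms by (intro young_function_mono[OF yf]) simp_all
  then show ?thesis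
    by (simp add: besov_profile_def d_def \<rho>_def)
qed

lemma besov_integrand_cutoff_le:
  assumes yf: "young_function \<phi>" and rt: "r < t" and lam: "0 < lam" and "a \<in> \<Omega>"
  shows "ennreal (\<phi> (\<bar>cutoff x r t a - cutoff x r t b\<bar> / (lam * norm (a - b) powr \<alpha>)) / norm (a - b) ^ k)
      * indicator \<Omega> b
    \<le> (indicator (\<Omega> \<inter> ball x t) a + indicator (\<Omega> \<inter> ball x t) b)
      * ennreal (besov_profile \<phi> \<alpha> lam (t - r) (norm (a - b)) / norm (a - b) ^ k)"
proof (cases "b \<in> \<Omega> \<and> (a \<in> ball x t \<or> b \<in> ball x t)")
  case True
  then have "1 \<le> indicator (\<Omega> \<inter> ball x t) a + (indicator (\<Omega> \<inter> ball x t) b :: ennreal)"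
    using \<open>a \<in> \<Omega>\<close> by (auto simp: indicator_def)
  moreover have "ennreal (\<phi> (\<bar>cutoff x r t a - cutoff x r t b\<bar> / (lam * norm (a - b) powr \<alpha>)) / norm (a - b) ^ k)
      \<le> ennreal (besov_profile \<phi> \<alpha> lam (t - r) (norm (a - b)) / norm (a - b) ^ k)"
    by (intro ennreal_leI divide_right_mono cutoff_diff_quotient_le[OF yf rt lam]) simp
  ultimately show ?thesis
    using True mult_mono[OF \<open>1 \<le> _\<close>] by simp
next
  case False
  then have "b \<notin> \<Omega> \<or> cutoff x r t a = 0 \<and> cutoff x r t b = 0"
    using cutoff_eq_0[OF rt] by blast
  then show ?thesis
    using yf by (auto simp: young_function_def)
qed

lemma besov_modular_cutoff_le:
  fixes \<Omega> :: "'a::euclidean_space set"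
  assumes yf: "young_function \<phi>" and rt: "r < t" and lam: "0 < lam"
    and \<Omega>[measurable]: "\<Omega> \<in> sets lborel"
  shows "besov_modular \<Omega> \<alpha> \<phi> (cutoff x r t) lam \<le> 2 * emeasure lborel (\<Omega> \<inter> ball x t) *
    (\<integral>\<^sup>+z. ennreal (besov_profile \<phi> \<alpha> lam (t - r) (norm z) / norm (z::'a) ^ (2 * DIM('a))) \<partial>lborel)"
proof -
  define B where "B = \<Omega> \<inter> ball x t"
  define H where "H z = ennreal (besov_profile \<phi> \<alpha> lam (t - r) (norm z) / norm z ^ (2 * DIM('a)))"
    for z :: 'a
  have [measurable]: "besov_profile \<phi> \<alpha> lam (t - r) \<in> borel_measurable borel"
    using borel_measurable_besov_profile[OF yf] .
  have "besov_modular \<Omega> \<alpha> \<phi> (cutoff x r t) lam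
      \<le> (\<integral>\<^sup>+a. (\<integral>\<^sup>+b. (indicator B a + indicator B b) * H (a - b) \<partial>lborel) \<partial>lborel)"
    unfolding besov_modular_def
  proof (intro nn_integral_mono)
    fix a :: 'a
    show "(\<integral>\<^sup>+b. ennreal (\<phi> (\<bar>cutoff x r t a - cutoff x r t b\<bar> / (lam * norm (a - b) powr \<alpha>))
        / norm (a - b) ^ (2 * DIM('a))) * indicator \<Omega> b \<partial>lborel) * indicator \<Omega> a
      \<le> (\<integral>\<^sup>+b. (indicator B a + indicator B b) * H (a - b) \<partial>lborel)"
      using besov_integrand_cutoff_le[OF yf rt lam, of a \<Omega>]
      by (cases "a \<in> \<Omega>") (auto simp: B_def H_def intro!: nn_integral_mono)
  qed
  also have "\<dots> = 2 * emeasure lborel B * (\<integral>\<^sup>+z. H z \<partial>lborel)"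
    by (rule nn_integral_indicator_convolution) (use \<Omega> in \<open>simp_all add: H_def B_def\<close>)
  finally show ?thesis
    unfolding B_def H_def .
qed

lemma orlicz_modular_cutoff_le:
  assumes yf: "young_function \<phi>" and rt: "r < t" and lam: "0 < lam"
    and \<Omega>: "\<Omega> \<in> sets lborel"
  shows "orlicz_modular \<Omega> \<phi> (cutoff x r t) lam \<le> ennreal (\<phi> (1 / lam)) * emeasure lborel (\<Omega> \<inter> ball x t)"
proof -
  have "orlicz_modular \<Omega> \<phi> (cutoff x r t) lam
      \<le> (\<integral>\<^sup>+z. ennreal (\<phi> (1 / lam)) * indicator (\<Omega> \<inter> ball x t) z \<partial>lborel)"
    unfolding orlicz_modular_def
  proof (intro nn_integral_mono)
    fix z
    have "\<bar>cutoff x r t z\<bar> \<le> 1"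
      using cutoff_nonneg[OF rt, of x z] cutoff_le_1[OF rt, of x z] by simp
    then have "\<phi> (\<bar>cutoff x r t z\<bar> / lam) \<le> \<phi> (1 / lam)"
      using lam by (intro young_function_mono[OF yf] divide_right_mono) simp_all
    moreover have "cutoff x r t z = 0" if "z \<notin> ball x t"
      using cutoff_eq_0[OF rt that] .
    ultimately show "ennreal (\<phi> (\<bar>cutoff x r t z\<bar> / lam)) * indicator \<Omega> z
        \<le> ennreal (\<phi> (1 / lam)) * indicator (\<Omega> \<inter> ball x t) z"
      using yf by (auto simp: indicator_def young_function_def ennreal_leI)
  qed
  also have "\<dots> = ennreal (\<phi> (1 / lam)) * emeasure lborel (\<Omega> \<inter> ball x t)"
    using \<Omega> by (simp add: nn_integral_cmult_indicator)
  finally show ?thesis .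
qed

definition cutoff_scale :: "(real \<Rightarrow> real) \<Rightarrow> real \<Rightarrow> nat \<Rightarrow> real \<Rightarrow> real \<Rightarrow> real" where
  "cutoff_scale \<phi> \<alpha> n s m = s powr (- \<alpha>) / phi_inv \<phi> (s ^ n / m)"

lemma cutoff_scale_pos:
  assumes "young_function \<phi>" "0 < s" "0 < m"
  shows "0 < cutoff_scale \<phi> \<alpha> n s m"
  using phi_inv_pos[OF assms(1), of "s ^ n / m"] assms(2,3) by (simp add: cutoff_scale_def)

lemma phi_cutoff_scale_le:
  assumes yf: "young_function \<phi>" and "0 < s" "0 < m" "1 \<le> C"
  shows "m * \<phi> (s powr (- \<alpha>) / (C * cutoff_scale \<phi> \<alpha> n s m)) / s ^ n \<le> 1 / C"
proof -
  define y where "y = phi_inv \<phi> (s ^ n / m)"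
  have y: "0 < y" "\<phi> y = s ^ n / m"
    using phi_inv_pos[OF yf] phi_phi_inv[OF yf] assms by (simp_all add: y_def)
  have "\<phi> (s powr (- \<alpha>) / (C * cutoff_scale \<phi> \<alpha> n s m)) = \<phi> (1 / C * y)"
    using assms y by (simp add: cutoff_scale_def flip: y_def)
  also have "\<dots> \<le> 1 / C * \<phi> y"
    using young_function_scale_le[OF yf, of "1 / C" y] y assms by simp
  finally show ?thesis
    using assms y by (simp add: field_simps)
qed

lemma phi_inverse_cutoff_scale_le:
  assumes yf: "young_function \<phi>" and "\<alpha> < 0" and fin: "Lambda_upper \<phi> n \<alpha> < \<infinity>"
    and s: "0 < s" "s \<le> D" and m: "0 < m"
    and C: "1 \<le> C" "2 ^ (n + 1) * enn2real (Lambda_upper \<phi> n \<alpha>) * D ^ n \<le> C"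
  shows "m * \<phi> (1 / (D powr \<alpha> * C * cutoff_scale \<phi> \<alpha> n s m)) \<le> 1"
proof -
  define y where "y = phi_inv \<phi> (s ^ n / m)"
  define A where "A = 2 ^ (n + 1) * enn2real (Lambda_upper \<phi> n \<alpha>)"
  have y: "0 < y" "\<phi> y = s ^ n / m"
    using phi_inv_pos[OF yf] phi_phi_inv[OF yf] s m by (simp_all add: y_def)
  have "0 < C"
    using C by simp
  \<comment> \<open>the growth bound trades the factor \<open>(D / s) powr (- \<alpha>)\<close> for \<open>(D / s) ^ n\<close>\<close>
  have "1 / (D powr \<alpha> * C * cutoff_scale \<phi> \<alpha> n s m) = (D / s) powr (- \<alpha>) * (y / C)"
    using s y C by (simp add: cutoff_scale_def powr_divide powr_minus field_simps flip: y_def)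
  then have "\<phi> (1 / (D powr \<alpha> * C * cutoff_scale \<phi> \<alpha> n s m)) \<le> A * (D / s) ^ n * \<phi> (y / C)"
    using Lambda_upper_growth[OF yf \<open>\<alpha> < 0\<close>, of "D / s" "y / C" n] fin s y C
    by (simp add: A_def)
  also have "\<dots> \<le> A * (D / s) ^ n * (1 / C * \<phi> y)"
    using young_function_scale_le[OF yf, of "1 / C" y] y s C by (intro mult_left_mono) (simp_all add: A_def)
  also have "\<dots> = A * D ^ n / C / m"
    using s m y by (simp add: power_divide)
  finally have "m * \<phi> (1 / (D powr \<alpha> * C * cutoff_scale \<phi> \<alpha> n s m)) \<le> A * D ^ n / C"
    using m \<open>0 < C\<close> by (simp add: field_simps)
  also have "\<dots> \<le> 1"
    using C by (simp add: A_def)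
  finally show ?thesis .
qed

lemma orlicz_modular_cutoff_le_1:
  fixes \<Omega> :: "'a::euclidean_space set"
  assumes yf: "young_function \<phi>" and "\<alpha> < 0" and fin: "Lambda_upper \<phi> DIM('a) \<alpha> < \<infinity>"
    and \<Omega>: "\<Omega> \<in> sets lborel" and D: "0 < D"
  obtains C where "0 < C"
    "\<And>x r t. r < t \<Longrightarrow> t - r \<le> D \<Longrightarrow> 0 < measure lebesgue (\<Omega> \<inter> ball x t) \<Longrightarrow>
      orlicz_modular \<Omega> \<phi> (cutoff x r t)
        (C * cutoff_scale \<phi> \<alpha> DIM('a) (t - r) (measure lebesgue (\<Omega> \<inter> ball x t))) \<le> 1"
proof
  define C where "C = max 1 (2 ^ (DIM('a) + 1) * enn2real (Lambda_upper \<phi> DIM('a) \<alpha>) * D ^ DIM('a))"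
  show "0 < D powr \<alpha> * C"
    using D by (simp add: C_def)
  fix x r t
  assume rt: "r < t" "t - r \<le> D" and m: "0 < measure lebesgue (\<Omega> \<inter> ball x t)"
  define lam where "lam = D powr \<alpha> * C * cutoff_scale \<phi> \<alpha> DIM('a) (t - r) (measure lebesgue (\<Omega> \<inter> ball x t))"
  have "0 < lam"
    using cutoff_scale_pos[OF yf _ m] rt D by (simp add: lam_def C_def)
  have "orlicz_modular \<Omega> \<phi> (cutoff x r t) lam \<le> ennreal (\<phi> (1 / lam) * measure lebesgue (\<Omega> \<inter> ball x t))"
    using orlicz_modular_cutoff_le[OF yf rt(1) \<open>0 < lam\<close> \<Omega>, of x] emeasure_inter_ball[OF \<Omega>]
      young_function_nonneg[OF yf, of "1 / lam"] \<open>0 < lam\<close>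
    by (simp add: ennreal_mult)
  also have "\<dots> \<le> 1"
    using phi_inverse_cutoff_scale_le[OF yf \<open>\<alpha> < 0\<close> fin _ rt(2) m, of C] rt
    by (simp add: lam_def C_def mult_ac ennreal_le_1)
  finally show "orlicz_modular \<Omega> \<phi> (cutoff x r t) (D powr \<alpha> * C * cutoff_scale \<phi> \<alpha> DIM('a) (t - r) (measure lebesgue (\<Omega> \<inter> ball x t))) \<le> 1"
    by (simp add: lam_def)
qed

lemma besov_modular_cutoff_le_Lambda:
  fixes \<Omega> :: "'a::euclidean_space set"
  assumes yf: "young_function \<phi>"
    and fin: "Lambda_lower \<phi> DIM('a) \<alpha> < \<infinity>" "Lambda_upper \<phi> DIM('a) \<alpha> < \<infinity>"
    and \<Omega>: "\<Omega> \<in> sets lborel" and rt: "r < t" and lam: "0 < lam"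
  shows "besov_modular \<Omega> \<alpha> \<phi> (cutoff x r t) lam \<le> ennreal
    (2 * DIM('a) * measure lborel (ball (0::'a) 1) *
       (enn2real (Lambda_lower \<phi> DIM('a) \<alpha>) + enn2real (Lambda_upper \<phi> DIM('a) \<alpha>)) *
     (measure lebesgue (\<Omega> \<inter> ball x t) * \<phi> ((t - r) powr (- \<alpha>) / lam) / (t - r) ^ DIM('a)))"
proof -
  define n where "n = DIM('a)"
  define w where "w = measure lborel (ball (0::'a) 1)"
  define L where "L = enn2real (Lambda_lower \<phi> n \<alpha>) + enn2real (Lambda_upper \<phi> n \<alpha>)"
  define s where "s = t - r"
  define m where "m = measure lebesgue (\<Omega> \<inter> ball x t)"
  define p where "p = \<phi> (s powr (- \<alpha>) / lam)"
  have s: "0 < s"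
    using rt by (simp add: s_def)
  have "0 \<le> m" "0 \<le> w" "0 \<le> p" "0 \<le> L"
    using young_function_nonneg[OF yf] lam s by (simp_all add: m_def w_def p_def L_def)
  have L: "Lambda_lower \<phi> n \<alpha> + Lambda_upper \<phi> n \<alpha> = ennreal L"
    using fin by (simp add: n_def L_def ennreal_enn2real_if less_top[symmetric])
  have "besov_modular \<Omega> \<alpha> \<phi> (cutoff x r t) lam \<le> 2 * ennreal m *
      (\<integral>\<^sup>+z. ennreal (besov_profile \<phi> \<alpha> lam s (norm z) / norm (z::'a) ^ (2 * n)) \<partial>lborel)"
    using besov_modular_cutoff_le[OF yf rt lam \<Omega>, of \<alpha> x] emeasure_inter_ball[OF \<Omega>]
    by (simp add: s_def m_def n_def)
  also have "\<dots> \<le> 2 * ennreal m * (ennreal (n * w * p / s ^ n) * ennreal L)"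
    using nn_integral_besov_profile_radial_le[OF yf s lam, of \<alpha>, where 'a='a] L
    by (intro mult_left_mono) (simp_all add: n_def w_def p_def)
  also have "\<dots> = ennreal (2 * n * w * L * (m * p / s ^ n))"
  proof -
    have "(2::ennreal) * ennreal m = ennreal (2 * m)"
      using \<open>0 \<le> m\<close> by (simp add: ennreal_mult)
    then show ?thesis
      using s \<open>0 \<le> m\<close> \<open>0 \<le> w\<close> \<open>0 \<le> p\<close> \<open>0 \<le> L\<close>
      by (simp add: ennreal_mult'[symmetric] mult_ac)
  qed
  finally show ?thesis
    by (simp add: n_def w_def L_def s_def m_def p_def)
qed

lemma besov_modular_cutoff_le_1:
  fixes \<Omega> :: "'a::euclidean_space set"
  assumes yf: "young_function \<phi>"
    and fin: "Lambda_lower \<phi> DIM('a) \<alpha> < \<infinity>" "Lambda_upper \<phi> DIM('a) \<alpha> < \<infinity>"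
    and \<Omega>: "\<Omega> \<in> sets lborel"
  obtains C where "0 < C"
    "\<And>x r t. r < t \<Longrightarrow> 0 < measure lebesgue (\<Omega> \<inter> ball x t) \<Longrightarrow>
      besov_modular \<Omega> \<alpha> \<phi> (cutoff x r t)
        (C * cutoff_scale \<phi> \<alpha> DIM('a) (t - r) (measure lebesgue (\<Omega> \<inter> ball x t))) \<le> 1"
proof
  define c where "c = 2 * DIM('a) * measure lborel (ball (0::'a) 1) *
    (enn2real (Lambda_lower \<phi> DIM('a) \<alpha>) + enn2real (Lambda_upper \<phi> DIM('a) \<alpha>))"
  define C where "C = max 1 c"
  show "0 < C"
    by (simp add: C_def)
  fix x r t
  assume rt: "r < t" and m: "0 < measure lebesgue (\<Omega> \<inter> ball x t)"
  define lam where "lam = C * cutoff_scale \<phi> \<alpha> DIM('a) (t - r) (measure lebesgue (\<Omega> \<inter> ball x t))"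
  have "0 < lam"
    using cutoff_scale_pos[OF yf _ m] rt by (simp add: lam_def C_def)
  have "besov_modular \<Omega> \<alpha> \<phi> (cutoff x r t) lam \<le> ennreal
      (c * (measure lebesgue (\<Omega> \<inter> ball x t) * \<phi> ((t - r) powr (- \<alpha>) / lam) / (t - r) ^ DIM('a)))"
    using besov_modular_cutoff_le_Lambda[OF yf fin \<Omega> rt \<open>0 < lam\<close>] by (simp add: c_def)
  also have "\<dots> \<le> ennreal (c * (1 / C))"
    using phi_cutoff_scale_le[OF yf _ m, of "t - r" C \<alpha> "DIM('a)"] rt
    by (intro ennreal_leI mult_left_mono) (simp_all add: C_def lam_def c_def)
  also have "\<dots> \<le> 1"
    by (simp add: C_def ennreal_le_1)
  finally show "besov_modular \<Omega> \<alpha> \<phi> (cutoff x r t) lam \<le> 1" .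
qed

lemma besov_norm_cutoff_le:
  fixes \<Omega> :: "'a::euclidean_space set"
  assumes yf: "young_function \<phi>" and "\<alpha> < 0"
    and fin: "Lambda_lower \<phi> DIM('a) \<alpha> < \<infinity>" "Lambda_upper \<phi> DIM('a) \<alpha> < \<infinity>"
    and \<Omega>: "\<Omega> \<in> sets lborel" and D: "0 < D"
  obtains C where "0 < C"
    "\<And>x r t. r < t \<Longrightarrow> t - r \<le> D \<Longrightarrow> 0 < measure lebesgue (\<Omega> \<inter> ball x t) \<Longrightarrow>
      cutoff x r t \<in> besov_space \<Omega> \<alpha> \<phi> \<and> besov_norm \<Omega> \<alpha> \<phi> (cutoff x r t)
        \<le> C * cutoff_scale \<phi> \<alpha> DIM('a) (t - r) (measure lebesgue (\<Omega> \<inter> ball x t))"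
proof -
  obtain C\<^sub>1 where "0 < C\<^sub>1" and orlicz: "\<And>x r t. r < t \<Longrightarrow> t - r \<le> D \<Longrightarrow>
      0 < measure lebesgue (\<Omega> \<inter> ball x t) \<Longrightarrow> orlicz_modular \<Omega> \<phi> (cutoff x r t)
        (C\<^sub>1 * cutoff_scale \<phi> \<alpha> DIM('a) (t - r) (measure lebesgue (\<Omega> \<inter> ball x t))) \<le> 1"
    using orlicz_modular_cutoff_le_1[OF yf \<open>\<alpha> < 0\<close> fin(2) \<Omega> D] by blast
  obtain C\<^sub>2 where "0 < C\<^sub>2" and besov: "\<And>x r t. r < t \<Longrightarrow>
      0 < measure lebesgue (\<Omega> \<inter> ball x t) \<Longrightarrow> besov_modular \<Omega> \<alpha> \<phi> (cutoff x r t)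
        (C\<^sub>2 * cutoff_scale \<phi> \<alpha> DIM('a) (t - r) (measure lebesgue (\<Omega> \<inter> ball x t))) \<le> 1"
    using besov_modular_cutoff_le_1[OF yf fin \<Omega>] by blast
  show ?thesis
  proof (rule that[of "C\<^sub>1 + C\<^sub>2"])
    show "0 < C\<^sub>1 + C\<^sub>2"
      using \<open>0 < C\<^sub>1\<close> \<open>0 < C\<^sub>2\<close> by simp
    fix x r t
    assume rt: "r < t" "t - r \<le> D" and m: "0 < measure lebesgue (\<Omega> \<inter> ball x t)"
    have "cutoff x r t \<in> borel_measurable (lebesgue_on \<Omega>)"
      using continuous_on_cutoff \<Omega> rt by (intro continuous_imp_measurable_on_sets_lebesgue) auto
    moreover have "0 < cutoff_scale \<phi> \<alpha> DIM('a) (t - r) (measure lebesgue (\<Omega> \<inter> ball x t))"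
      using cutoff_scale_pos[OF yf _ m] rt by simp
    ultimately show "cutoff x r t \<in> besov_space \<Omega> \<alpha> \<phi> \<and> besov_norm \<Omega> \<alpha> \<phi> (cutoff x r t)
        \<le> (C\<^sub>1 + C\<^sub>2) * cutoff_scale \<phi> \<alpha> DIM('a) (t - r) (measure lebesgue (\<Omega> \<inter> ball x t))"
      using besov_space_norm_le[OF _ _ _ orlicz[OF rt m] besov[OF rt(1) m]] \<open>0 < C\<^sub>1\<close> \<open>0 < C\<^sub>2\<close>
      by (simp add: distrib_right)
  qed
qed

theorem lemma2p6:
  fixes \<Omega> :: "'a::euclidean_space set" and \<alpha> :: real and \<phi> :: "real \<Rightarrow> real"
  assumes "DIM('a) \<ge> 2"
    and "-real DIM('a) < \<alpha>" and "\<alpha> < 0"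
    and "young_function \<phi>"
    and "Lambda_lower \<phi> DIM('a) \<alpha> < \<infinity>" and "Lambda_upper \<phi> DIM('a) \<alpha> < \<infinity>"
    and "open \<Omega>" and "connected \<Omega>" and "\<Omega> \<noteq> {}" and "bounded \<Omega>"
  shows "\<exists>C>0. \<forall>x\<in>\<Omega>. \<forall>r t. 0 < r \<and> r < t \<and> t < diameter \<Omega> / 2 \<longrightarrow>
           cutoff x r t \<in> besov_space \<Omega> \<alpha> \<phi> \<and>
           besov_norm \<Omega> \<alpha> \<phi> (cutoff x r t)
             \<le> C * (t - r) powr (- \<alpha>) /
                phi_inv \<phi> ((t - r) ^ DIM('a) / measure lebesgue (\<Omega> \<inter> ball x t))"
proof -
  have \<Omega>: "\<Omega> \<in> sets lborel"
    using \<open>open \<Omega>\<close> by simp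
  obtain C where "0 < C" and C: "\<And>x r t. r < t \<Longrightarrow> t - r \<le> max 1 (diameter \<Omega>) \<Longrightarrow>
      0 < measure lebesgue (\<Omega> \<inter> ball x t) \<Longrightarrow>
      cutoff x r t \<in> besov_space \<Omega> \<alpha> \<phi> \<and> besov_norm \<Omega> \<alpha> \<phi> (cutoff x r t)
        \<le> C * cutoff_scale \<phi> \<alpha> DIM('a) (t - r) (measure lebesgue (\<Omega> \<inter> ball x t))"
    by (rule besov_norm_cutoff_le[OF assms(4,3,5,6) \<Omega>, of "max 1 (diameter \<Omega>)"]) auto
  have "cutoff x r t \<in> besov_space \<Omega> \<alpha> \<phi> \<and> besov_norm \<Omega> \<alpha> \<phi> (cutoff x r t)
      \<le> C * cutoff_scale \<phi> \<alpha> DIM('a) (t - r) (measure lebesgue (\<Omega> \<inter> ball x t))"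
    if "x \<in> \<Omega>" "0 < r" "r < t" "t < diameter \<Omega> / 2" for x r t
  proof (rule C)
    show "t - r \<le> max 1 (diameter \<Omega>)"
      using that by (intro max.coboundedI2) linarith
    show "0 < measure lebesgue (\<Omega> \<inter> ball x t)"
      using measure_open_inter_ball_pos[OF \<open>open \<Omega>\<close> \<open>x \<in> \<Omega>\<close>] that by simp
  qed fact
  then show ?thesis
    using \<open>0 < C\<close> by (intro exI[of _ C]) (simp add: cutoff_scale_def)
qed

end
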